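(* Let $\mathbf v\in\mathrm{GF}(q^m)^n$ have rank $r\ge0$. The rank weight enumerator of $\mathcal L=\langle\mathbf v\rangle^\perp$ depends only on $r$ and equals $$W^{\mathrm R}_{\mathcal L}(x,y)=q^{-m}\left\{\big[x+(q^m-1)y\big]^{[n]}+(q^m-1)(x-y)^{[r]}*\big[x+(q^m-1)y\big]^{[n-r]}\right\}.$$
   Context: The rank of a vector over $\mathrm{GF}(q^m)$ is the maximum number of its coordinates linearly independent over $\mathrm{GF}(q)$. $\langle\mathbf v\rangle=\{a\mathbf v:a\in\mathrm{GF}(q^m)\}$ and $\perp$ denotes the dual with respect to the standard inner product $\sum_iu_iv_i$. The rank weight enumerator of a code $\mathcal C\subseteq\mathrm{GF}(q^m)^n$ is $\sum_{\mathbf u\in\mathcal C}y^{\mathrm{rk}(\mathbf u)}x^{n-\mathrm{rk}(\mathbf u)}$. $q$-product: for homogeneous polynomials $a(x,y;m)=\sum_{i=0}^r a_i(m)y^ix^{r-i}$ and $b(x,y;m)=\sum_{j=0}^s b_j(m)y^jx^{s-j}$ with coefficients real functions of $m$ (out-of-range coefficients zero), $a*b=\sum_{u=0}^{r+s}c_u(m)y^ux^{r+s-u}$ with $c_u(m)=\sum_{i=0}^u q^{is}a_i(m)b_{u-i}(m-i)$; $q$-powers: $a^{[0]}=1$, $a^{[n]}=a^{[n-1]}*a$. The polynomial $x+(q^m-1)y$ has coefficients $1$ and $q^m-1$, and $x-y$ has coefficients $1,-1$. *)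

theory Defs
  imports Complex_Main
begin

text \<open>F is a subfield of the ambient field (plays the role of GF(q) inside GF(q^m)).\<close>
definition is_subfield :: "'a::field set \<Rightarrow> bool" where
  "is_subfield F \<longleftrightarrow> 0 \<in> F \<and> 1 \<in> F \<and>
     (\<forall>a\<in>F. \<forall>b\<in>F. a + b \<in> F \<and> a * b \<in> F) \<and>
     (\<forall>a\<in>F. - a \<in> F \<and> inverse a \<in> F)"

definition lin_indep_over :: "'a::field set \<Rightarrow> nat set \<Rightarrow> 'a list \<Rightarrow> bool" where
  "lin_indep_over F S u \<longleftrightarrow>
     (\<forall>c. (\<forall>i\<in>S. c i \<in> F) \<and> (\<Sum>i\<in>S. c i * u ! i) = 0 \<longrightarrow> (\<forall>i\<in>S. c i = 0))"

definition rank_over :: "'a::field set \<Rightarrow> 'a list \<Rightarrow> nat" where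
  "rank_over F u = Max {card S | S. S \<subseteq> {..<length u} \<and> lin_indep_over F S u}"

definition dual_span :: "'a::field list \<Rightarrow> 'a list set" where
  "dual_span v = {u. length u = length v \<and> (\<Sum>i<length v. u ! i * v ! i) = 0}"

definition rank_weight_enum :: "'a::field set \<Rightarrow> nat \<Rightarrow> 'a list set \<Rightarrow> real \<Rightarrow> real \<Rightarrow> real" where
  "rank_weight_enum F n C x y = (\<Sum>u\<in>C. y ^ rank_over F u * x ^ (n - rank_over F u))"

text \<open>Homogeneous polynomial of degree d in x,y whose coefficients are real functions of m
  (m ranges over int so that shifts m - i make sense): represented as (d, a) with
  polynomial \<Sum>i=0..d. a i m y^i x^(d-i); coefficients with index > d are treated as zero.\<close>
type_synonym hpoly = "nat \<times> (nat \<Rightarrow> int \<Rightarrow> real)"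

definition hcoeff :: "hpoly \<Rightarrow> nat \<Rightarrow> int \<Rightarrow> real" where
  "hcoeff p i m = (if i \<le> fst p then snd p i m else 0)"

definition qprod :: "nat \<Rightarrow> hpoly \<Rightarrow> hpoly \<Rightarrow> hpoly" where
  "qprod q a b = (fst a + fst b,
     \<lambda>u m. \<Sum>i=0..u. real q ^ (i * fst b) * hcoeff a i m * hcoeff b (u - i) (m - int i))"

fun qpow :: "nat \<Rightarrow> hpoly \<Rightarrow> nat \<Rightarrow> hpoly" where
  "qpow q a 0 = (0, \<lambda>i m. 1)"
| "qpow q a (Suc n) = qprod q (qpow q a n) a"

definition heval :: "hpoly \<Rightarrow> int \<Rightarrow> real \<Rightarrow> real \<Rightarrow> real" where
  "heval p m x y = (\<Sum>i=0..fst p. hcoeff p i m * y ^ i * x ^ (fst p - i))"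

text \<open>x + (q^m - 1) y\<close>
definition poly_A :: "nat \<Rightarrow> hpoly" where
  "poly_A q = (1, \<lambda>i m. if i = 0 then 1 else real q powi m - 1)"

text \<open>x - y\<close>
definition poly_B :: "hpoly" where
  "poly_B = (1, \<lambda>i m. if i = 0 then 1 else -1)"

end

theory Submission
  imports Defs "HOL-Combinatorics.Permutations"
begin

text \<open>
  Write N(v,k,a) for the number of vectors u of length n and rank k with u.v = a, T(n,k) for the
  number of vectors of length n and rank k, and D(v,k) = N(v,k,0) - N(v,k,1). Multiplying u by a
  nonzero scalar preserves its rank, so N(v,k,a) = N(v,k,1) for every nonzero a, and summing over a
  gives q^m N(v,k,0) = T(n,k) + (q^m - 1) D(v,k). It remains to show that D(v,k) is the k-th
  coefficient of (x - y)^[r] * (x + (q^m - 1) y)^[n-r]; T(n,k) is the case v = 0.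

  Permuting coordinates changes nothing, so a coordinate w in the
  GF(q)-span of the others may be assumed to be the last one; then counting the possible last
  coordinates of u shows that appending w multiplies the generating polynomial of D by
  x + (q^m - 1) y in the sense of the q-product. If instead v has full rank, u.v = a determines the
  last coordinate of u, and averaging over the shears v' + w c (c in GF(q)^(n-1)) of the first
  n - 1 coordinates, which all have full rank and hence the same excess by induction, shows that
  appending w multiplies it by x - y.
\<close>

section \<open>q-products\<close>

lemma fst_qprod [simp]: "fst (qprod q a b) = fst a + fst b"
  by (simp add: qprod_def)

lemma fst_qpow [simp]: "fst (qpow q a n) = n * fst a"
  by (induction n) auto

lemma fst_poly_A [simp]: "fst (poly_A q) = 1"
  by (simp add: poly_A_def)

lemma fst_poly_B [simp]: "fst poly_B = 1"
  by (simp add: poly_B_def)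

lemma hcoeff_qprod:
  "hcoeff (qprod q a b) u m =
    (\<Sum>i=0..u. real q ^ (i * fst b) * hcoeff a i m * hcoeff b (u - i) (m - int i))"
proof (cases "u \<le> fst a + fst b")
  case True
  then show ?thesis by (simp add: hcoeff_def qprod_def)
next
  case False
  have "(\<Sum>i=0..u. real q ^ (i * fst b) * hcoeff a i m * hcoeff b (u - i) (m - int i)) = 0"
    by (rule sum.neutral) (use False in \<open>auto simp: hcoeff_def\<close>)
  with False show ?thesis by (simp add: hcoeff_def qprod_def)
qed

lemma hcoeff_qpow_0: "hcoeff (qpow q a 0) i m = (if i = 0 then 1 else 0)"
  by (simp add: hcoeff_def)

text \<open>The simplifier unfolds \<^term>\<open>qpow q a 0\<close> by \<open>qpow.simps\<close>, so the unit laws below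
  only fire with \<open>qpow.simps\<close> deleted or under \<open>simp only\<close>.\<close>

lemma hcoeff_qprod_qpow_0_left: "hcoeff (qprod q (qpow q a 0) b) u m = hcoeff b u m"
proof -
  have "(\<Sum>i=0..u. real q ^ (i * fst b) * hcoeff (qpow q a 0) i m * hcoeff b (u - i) (m - int i))
      = (\<Sum>i\<in>{0}. real q ^ (i * fst b) * hcoeff (qpow q a 0) i m * hcoeff b (u - i) (m - int i))"
    by (rule sum.mono_neutral_right) (auto simp: hcoeff_qpow_0 simp del: qpow.simps)
  then show ?thesis by (simp add: hcoeff_qprod hcoeff_qpow_0 del: qpow.simps)
qed

lemma hcoeff_qprod_qpow_0_right: "hcoeff (qprod q b (qpow q a 0)) u m = hcoeff b u m"
proof -
  have "(\<Sum>i=0..u. real q ^ (i * 0) * hcoeff b i m * hcoeff (qpow q a 0) (u - i) (m - int i))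
      = (\<Sum>i\<in>{u}. real q ^ (i * 0) * hcoeff b i m * hcoeff (qpow q a 0) (u - i) (m - int i))"
    by (rule sum.mono_neutral_right) (auto simp: hcoeff_qpow_0 simp del: qpow.simps)
  then show ?thesis by (simp add: hcoeff_qprod hcoeff_qpow_0 del: qpow.simps)
qed

lemma hcoeff_qprod_assoc:
  "hcoeff (qprod q (qprod q a b) c) u m = hcoeff (qprod q a (qprod q b c)) u m"
proof -
  define g where "g j l = real q ^ ((j + l) * fst c + j * fst b) * hcoeff a j m *
       hcoeff b l (m - int j) * hcoeff c (u - (j + l)) (m - int (j + l))" for j l
  have "hcoeff (qprod q (qprod q a b) c) u m = (\<Sum>i\<le>u. \<Sum>j\<le>i. g j (i - j))"
    unfolding hcoeff_qprod atLeast0AtMost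
    by (auto simp: g_def sum_distrib_left sum_distrib_right power_add add_mult_distrib mult_ac
        intro!: sum.cong)
  also have "\<dots> = (\<Sum>(j, l)\<in>{(j, l). j + l \<le> u}. g j l)"
    by (simp add: sum.triangle_reindex_eq)
  also have "{(j, l). j + l \<le> u} = Sigma {..u} (\<lambda>j. {..u - j})"
    by auto
  also have "(\<Sum>(j, l)\<in>Sigma {..u} (\<lambda>j. {..u - j}). g j l) = (\<Sum>j\<le>u. \<Sum>l\<le>u - j. g j l)"
    by (simp add: sum.Sigma)
  also have "\<dots> = hcoeff (qprod q a (qprod q b c)) u m"
    unfolding hcoeff_qprod atLeast0AtMost
    by (auto simp: g_def sum_distrib_left power_add add_mult_distrib add_mult_distrib2
        algebra_simps intro!: sum.cong)
  finally show ?thesis .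
qed

lemma hcoeff_qprod_linear:
  assumes "fst b = 1"
  shows "hcoeff (qprod q a b) k m = real q ^ k * hcoeff a k m * hcoeff b 0 (m - int k) +
     (if k = 0 then 0 else real q ^ (k - 1) * hcoeff a (k - 1) m * hcoeff b 1 (m - int (k - 1)))"
proof (cases k)
  case 0
  then show ?thesis by (simp add: hcoeff_qprod assms)
next
  case (Suc j)
  have "hcoeff b (Suc j - i) (m - int i) = 0" if "i < j" for i
  proof -
    have "fst b < Suc j - i" using assms that by simp
    then show ?thesis by (simp add: hcoeff_def)
  qed
  then have "(\<Sum>i=0..Suc j. real q ^ i * hcoeff a i m * hcoeff b (Suc j - i) (m - int i))
     = (\<Sum>i\<in>{j, Suc j}. real q ^ i * hcoeff a i m * hcoeff b (Suc j - i) (m - int i))"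
    by (intro sum.mono_neutral_right) auto
  then show ?thesis using Suc by (simp add: hcoeff_qprod assms)
qed

lemma hcoeff_poly_A:
  "hcoeff (poly_A q) i m = (if i = 0 then 1 else if i = 1 then real q powi m - 1 else 0)"
  by (simp add: hcoeff_def poly_A_def)

lemma hcoeff_poly_B: "hcoeff poly_B i m = (if i = 0 then 1 else if i = 1 then -1 else 0)"
  by (simp add: hcoeff_def poly_B_def)

lemma hcoeff_qprod_poly_A:
  assumes "q > 0"
  shows "hcoeff (qprod q a (poly_A q)) k m = real q ^ k * hcoeff a k m +
     (if k = 0 then 0 else (real q powi m - real q ^ (k - 1)) * hcoeff a (k - 1) m)"
proof (cases k)
  case (Suc j)
  have "real q ^ j * (real q powi (m - int j) - 1) = real q powi m - real q ^ j"
    using assms by (simp add: power_int_diff field_simps)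
  then show ?thesis
    using Suc by (simp add: hcoeff_qprod_linear hcoeff_poly_A mult_ac)
qed (simp add: hcoeff_qprod_linear hcoeff_poly_A)

lemma hcoeff_qprod_poly_B:
  "hcoeff (qprod q a poly_B) k m = real q ^ k * hcoeff a k m -
     (if k = 0 then 0 else real q ^ (k - 1) * hcoeff a (k - 1) m)"
  by (simp add: hcoeff_qprod_linear hcoeff_poly_B)

section \<open>Linear combinations of list entries\<close>

definition lincomb :: "nat set \<Rightarrow> 'a::comm_ring_1 list \<Rightarrow> (nat \<Rightarrow> 'a) \<Rightarrow> 'a" where
  "lincomb I u c = (\<Sum>i\<in>I. c i * u ! i)"

lemma lincomb_cong: "(\<And>i. i \<in> I \<Longrightarrow> c i = d i) \<Longrightarrow> lincomb I u c = lincomb I u d"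
  by (simp add: lincomb_def)

lemma lincomb_add: "lincomb I u (\<lambda>i. c i + d i) = lincomb I u c + lincomb I u d"
  by (simp add: lincomb_def distrib_right sum.distrib)

lemma lincomb_snoc:
  "lincomb {..<Suc (length u)} (u @ [t]) c = lincomb {..<length u} u c + c (length u) * t"
  by (simp add: lincomb_def nth_append)

lemma lincomb_uminus: "lincomb I u (\<lambda>i. - c i) = - lincomb I u c"
  by (simp add: lincomb_def sum_negf)

definition dot :: "'a::comm_ring_1 list \<Rightarrow> 'a list \<Rightarrow> 'a" where
  "dot u v = (\<Sum>i<length v. u ! i * v ! i)"

definition plus_scaled :: "'a::comm_ring_1 list \<Rightarrow> 'a \<Rightarrow> (nat \<Rightarrow> 'a) \<Rightarrow> 'a list" where
  "plus_scaled u t c = map (\<lambda>i. u ! i + t * c i) [0..<length u]"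

lemma length_plus_scaled [simp]: "length (plus_scaled u t c) = length u"
  by (simp add: plus_scaled_def)

lemma nth_plus_scaled [simp]: "i < length u \<Longrightarrow> plus_scaled u t c ! i = u ! i + t * c i"
  by (simp add: plus_scaled_def)

lemma plus_scaled_cancel:
  "plus_scaled (plus_scaled u t c) t (\<lambda>i. - c i) = u"
  "plus_scaled (plus_scaled u t (\<lambda>i. - c i)) t c = u"
  by (rule nth_equalityI; simp add: algebra_simps)+

lemma dot_snoc: "length u = length v \<Longrightarrow> dot (u @ [t]) (v @ [w]) = dot u v + t * w"
  by (simp add: dot_def nth_append)

lemma dot_plus_scaled_left:
  "length u = length v \<Longrightarrow> dot (plus_scaled u t c) v = dot u v + t * lincomb {..<length v} v c"
  by (simp add: dot_def lincomb_def algebra_simps sum.distrib sum_distrib_left)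

lemma dot_plus_scaled_right:
  "length u = length v \<Longrightarrow> dot u (plus_scaled v w c) = dot u v + w * lincomb {..<length u} u c"
  by (simp add: dot_def lincomb_def algebra_simps sum.distrib sum_distrib_left)

lemma dot_scale_left: "length u = length v \<Longrightarrow> dot (map ((*) a) u) v = a * dot u v"
  by (simp add: dot_def sum_distrib_left mult.assoc)

lemma dot_permute_list:
  assumes "p permutes {..<length v}" "length u = length v"
  shows "dot (permute_list p u) (permute_list p v) = dot u v"
proof -
  have "dot (permute_list p u) (permute_list p v) = (\<Sum>i<length v. u ! p i * v ! p i)"
    unfolding dot_def using assms by (intro sum.cong) (simp_all add: permute_list_nth)
  also have "\<dots> = dot u v"
    unfolding dot_def using sum.permute[OF assms(1), of "\<lambda>i. u ! i * v ! i"] by (simp add: comp_def)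
  finally show ?thesis .
qed

lemma dot_replicate_0 [simp]: "dot u (replicate n 0) = 0"
  by (simp add: dot_def)

section \<open>Spans and ranks over a subfield\<close>

locale finite_field_extension =
  fixes F :: "'a::{finite,field} set" and q m :: nat
  assumes subfield: "is_subfield F"
    and card_subfield: "card F = q"
    and card_field: "card (UNIV :: 'a set) = q ^ m"
begin

lemma subfield_closed [simp]:
  "0 \<in> F" "1 \<in> F" "a \<in> F \<Longrightarrow> - a \<in> F" "a \<in> F \<Longrightarrow> b \<in> F \<Longrightarrow> a + b \<in> F"
  "a \<in> F \<Longrightarrow> b \<in> F \<Longrightarrow> a * b \<in> F" "a \<in> F \<Longrightarrow> inverse a \<in> F"
  using subfield by (simp_all add: is_subfield_def)

lemma subfield_diff [simp]: "a \<in> F \<Longrightarrow> b \<in> F \<Longrightarrow> a - b \<in> F"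
  using subfield_closed(4)[of a "- b"] subfield_closed(3)[of b] by simp

lemma subfield_divide [simp]: "a \<in> F \<Longrightarrow> b \<in> F \<Longrightarrow> a / b \<in> F"
  by (simp add: divide_inverse)

lemma q_gt_1: "1 < q"
proof -
  have "card {0::'a, 1} \<le> card F"
    by (rule card_mono) auto
  then show ?thesis using card_subfield by simp
qed

text \<open>Coefficient vectors are taken extensional, so that they can be counted
  (\<open>card_lincomb_fiber\<close>); \<open>Fspan_on_iff\<close> states the unrestricted description.\<close>

definition Fspan_on :: "nat set \<Rightarrow> 'a list \<Rightarrow> 'a set" where
  "Fspan_on I u = lincomb I u ` (I \<rightarrow>\<^sub>E F)"

abbreviation Fspan :: "'a list \<Rightarrow> 'a set" where
  "Fspan u \<equiv> Fspan_on {..<length u} u"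

lemma Fspan_on_iff: "x \<in> Fspan_on I u \<longleftrightarrow> (\<exists>c. (\<forall>i\<in>I. c i \<in> F) \<and> x = lincomb I u c)"
proof
  assume "\<exists>c. (\<forall>i\<in>I. c i \<in> F) \<and> x = lincomb I u c"
  then obtain c where "\<forall>i\<in>I. c i \<in> F" "x = lincomb I u c" by blast
  moreover have "lincomb I u (restrict c I) = lincomb I u c"
    by (simp add: lincomb_def)
  ultimately show "x \<in> Fspan_on I u"
    unfolding Fspan_on_def by (intro image_eqI[of _ _ "restrict c I"]) auto
qed (auto simp: Fspan_on_def)

lemma lincomb_in_Fspan_on: "(\<And>i. i \<in> I \<Longrightarrow> c i \<in> F) \<Longrightarrow> lincomb I u c \<in> Fspan_on I u"
  by (auto simp: Fspan_on_iff)

lemma Fspan_onE: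
  assumes "x \<in> Fspan_on I u"
  obtains c where "\<forall>i\<in>I. c i \<in> F" "x = lincomb I u c"
  using assms unfolding Fspan_on_iff by blast

lemma Fspan_on_zero [simp]: "0 \<in> Fspan_on I u"
  using lincomb_in_Fspan_on[of I "\<lambda>_. 0" u] by (simp add: lincomb_def)

lemma Fspan_on_add:
  assumes "x \<in> Fspan_on I u" "y \<in> Fspan_on I u"
  shows "x + y \<in> Fspan_on I u"
proof -
  obtain c where "\<forall>i\<in>I. c i \<in> F" "x = lincomb I u c"
    using assms(1) by (rule Fspan_onE)
  moreover obtain d where "\<forall>i\<in>I. d i \<in> F" "y = lincomb I u d"
    using assms(2) by (rule Fspan_onE)
  ultimately show ?thesis
    using lincomb_in_Fspan_on[of I "\<lambda>i. c i + d i" u] by (simp add: lincomb_add)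
qed

lemma Fspan_on_smult:
  assumes "a \<in> F" "x \<in> Fspan_on I u"
  shows "a * x \<in> Fspan_on I u"
proof -
  obtain c where "\<forall>i\<in>I. c i \<in> F" "x = lincomb I u c"
    using assms(2) by (rule Fspan_onE)
  then show ?thesis
    using assms(1) lincomb_in_Fspan_on[of I "\<lambda>i. a * c i" u]
    by (simp add: lincomb_def sum_distrib_left mult.assoc)
qed

lemma nth_in_Fspan_on:
  assumes "finite I" "i \<in> I"
  shows "u ! i \<in> Fspan_on I u"
proof -
  have "lincomb I u (\<lambda>j. if j = i then 1 else 0) = (\<Sum>j\<in>I. if j = i then u ! j else 0)"
    unfolding lincomb_def by (rule sum.cong) auto
  also have "\<dots> = u ! i"
    using assms by simp
  finally have "lincomb I u (\<lambda>j. if j = i then 1 else 0) = u ! i" .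
  then show ?thesis
    using lincomb_in_Fspan_on[of I "\<lambda>j. if j = i then 1 else 0" u] by simp
qed

lemma Fspan_on_diff:
  assumes "x \<in> Fspan_on I u" "y \<in> Fspan_on I u"
  shows "x - y \<in> Fspan_on I u"
proof -
  have "x + (- 1) * y \<in> Fspan_on I u"
    using assms by (intro Fspan_on_add Fspan_on_smult) auto
  then show ?thesis by simp
qed

lemma Fspan_on_sum: "(\<And>j. j \<in> J \<Longrightarrow> f j \<in> Fspan_on I u) \<Longrightarrow> sum f J \<in> Fspan_on I u"
  by (induction J rule: infinite_finite_induct) (simp_all add: Fspan_on_add)

lemma Fspan_on_subset:
  assumes "\<And>i. i \<in> I \<Longrightarrow> u ! i \<in> Fspan_on J w"
  shows "Fspan_on I u \<subseteq> Fspan_on J w"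
proof
  fix x assume "x \<in> Fspan_on I u"
  then obtain c where "\<forall>i\<in>I. c i \<in> F" "x = lincomb I u c"
    unfolding Fspan_on_iff by blast
  then show "x \<in> Fspan_on J w"
    unfolding lincomb_def using assms by (auto intro!: Fspan_on_sum Fspan_on_smult)
qed

lemma set_subset_Fspan: "set u \<subseteq> Fspan u"
  by (auto simp: in_set_conv_nth intro: nth_in_Fspan_on)

lemma Fspan_subset_Fspan: "set u \<subseteq> Fspan w \<Longrightarrow> Fspan u \<subseteq> Fspan w"
  by (rule Fspan_on_subset) auto

lemma lin_indep_overD:
  assumes "lin_indep_over F I u" "\<forall>i\<in>I. c i \<in> F" "(\<Sum>i\<in>I. c i * u ! i) = 0" "i \<in> I"
  shows "c i = 0"
  using assms unfolding lin_indep_over_def by blast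

lemma lin_indep_over_insert:
  assumes "finite I" "lin_indep_over F I u" "j \<notin> I" "u ! j \<notin> Fspan_on I u"
  shows "lin_indep_over F (insert j I) u"
  unfolding lin_indep_over_def
proof (intro allI impI)
  fix c assume c: "(\<forall>i\<in>insert j I. c i \<in> F) \<and> (\<Sum>i\<in>insert j I. c i * u ! i) = 0"
  then have relation: "c j * u ! j + lincomb I u c = 0"
    using assms(1,3) by (simp add: lincomb_def)
  have "c j = 0"
  proof (rule ccontr)
    assume "c j \<noteq> 0"
    then have "u ! j = - lincomb I u c / c j"
      using relation by (simp add: field_simps add_eq_0_iff2)
    also have "\<dots> = lincomb I u (\<lambda>i. - c i / c j)"
      by (simp add: lincomb_def sum_divide_distrib sum_negf)
    finally have "u ! j = lincomb I u (\<lambda>i. - c i / c j)" .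
    moreover have "lincomb I u (\<lambda>i. - c i / c j) \<in> Fspan_on I u"
      using c by (intro lincomb_in_Fspan_on) auto
    ultimately show False using assms(4) by simp
  qed
  moreover have "(\<Sum>i\<in>I. c i * u ! i) = 0"
    using relation \<open>c j = 0\<close> by (simp add: lincomb_def)
  then have "\<forall>i\<in>I. c i = 0"
    using lin_indep_overD[OF assms(2), of c] c by blast
  ultimately show "\<forall>i\<in>insert j I. c i = 0" by simp
qed

lemma card_Fspan_on_indep:
  assumes "finite I" "lin_indep_over F I u"
  shows "card (Fspan_on I u) = q ^ card I"
proof -
  have "inj_on (lincomb I u) (I \<rightarrow>\<^sub>E F)"
  proof (rule inj_onI)
    fix c d assume c: "c \<in> I \<rightarrow>\<^sub>E F" and d: "d \<in> I \<rightarrow>\<^sub>E F" and "lincomb I u c = lincomb I u d"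
    then have "(\<Sum>i\<in>I. (c i - d i) * u ! i) = 0"
      by (simp add: lincomb_def left_diff_distrib sum_subtractf)
    moreover have "\<forall>i\<in>I. c i - d i \<in> F"
      using c d by (auto simp: PiE_iff)
    ultimately have "\<forall>i\<in>I. c i - d i = 0"
      using lin_indep_overD[OF assms(2), of "\<lambda>i. c i - d i"] by blast
    then show "c = d"
      using c d by (intro PiE_ext) auto
  qed
  then show ?thesis
    using assms(1) by (simp add: Fspan_on_def card_image card_PiE card_subfield)
qed

lemma coordinate_basis:
  obtains I where "I \<subseteq> {..<length u}" "lin_indep_over F I u" "card I = rank_over F u"
    "Fspan u = Fspan_on I u"
proof -
  let ?ranks = "{card S | S. S \<subseteq> {..<length u} \<and> lin_indep_over F S u}"
  have "?ranks \<subseteq> card ` Pow {..<length u}"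
    by auto
  then have finite_ranks: "finite ?ranks"
    by (rule finite_subset) simp
  have "lin_indep_over F {} u"
    by (simp add: lin_indep_over_def)
  then have "?ranks \<noteq> {}"
    by blast
  then have "Max ?ranks \<in> ?ranks"
    using finite_ranks by (rule Max_in[rotated])
  then obtain I where I: "I \<subseteq> {..<length u}" "lin_indep_over F I u" "card I = rank_over F u"
    by (auto simp: rank_over_def)
  have finite_I: "finite I"
    using I(1) finite_subset by blast
  have spans: "u ! j \<in> Fspan_on I u" if "j < length u" for j
  proof (rule ccontr)
    assume j: "u ! j \<notin> Fspan_on I u"
    then have "j \<notin> I"
      using nth_in_Fspan_on[OF finite_I] by blast
    then have "card (insert j I) \<in> ?ranks"
      using lin_indep_over_insert[OF finite_I I(2) _ j] I(1) that by blast
    then have "card (insert j I) \<le> rank_over F u"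
      using finite_ranks by (simp add: rank_over_def)
    then show False
      using I(3) \<open>j \<notin> I\<close> finite_I by simp
  qed
  have "Fspan u \<subseteq> Fspan_on I u"
    using spans by (intro Fspan_on_subset) auto
  moreover have "Fspan_on I u \<subseteq> Fspan u"
    using I(1) by (intro Fspan_on_subset nth_in_Fspan_on) auto
  ultimately show ?thesis
    using I by (intro that) auto
qed

lemma rank_over_le_length: "rank_over F u \<le> length u"
proof -
  obtain I where "I \<subseteq> {..<length u}" "card I = rank_over F u"
    by (rule coordinate_basis)
  then show ?thesis
    using card_mono[of "{..<length u}" I] by simp
qed

lemma card_Fspan: "card (Fspan u) = q ^ rank_over F u"
proof -
  obtain I where "I \<subseteq> {..<length u}" "lin_indep_over F I u" "card I = rank_over F u"
    "Fspan u = Fspan_on I u"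
    by (rule coordinate_basis)
  then show ?thesis
    using card_Fspan_on_indep[of I u] finite_subset[of I "{..<length u}"] by simp
qed

lemma rank_over_eqI:
  assumes "card (Fspan u) = card (Fspan w)"
  shows "rank_over F u = rank_over F w"
proof -
  have "q ^ rank_over F u = q ^ rank_over F w"
    using assms by (simp only: card_Fspan)
  then show ?thesis
    using q_gt_1 power_inject_exp by blast
qed

lemma dependent_coordinate:
  assumes "rank_over F u < length u"
  obtains j where "j < length u" "u ! j \<in> Fspan_on ({..<length u} - {j}) u"
proof -
  obtain I where I: "I \<subseteq> {..<length u}" "card I = rank_over F u" "Fspan u = Fspan_on I u"
    by (rule coordinate_basis)
  have "I \<noteq> {..<length u}"
    using I(2) assms by auto
  then obtain j where j: "j < length u" "j \<notin> I"
    using I(1) by blast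
  have "u ! j \<in> Fspan_on I u"
    using I(3) j(1) nth_in_Fspan_on[of "{..<length u}" j u] by simp
  also have "Fspan_on I u \<subseteq> Fspan_on ({..<length u} - {j}) u"
    using I(1) j by (intro Fspan_on_subset nth_in_Fspan_on) auto
  finally show ?thesis
    using j(1) that by blast
qed

lemma Fspan_snoc: "Fspan (u @ [t]) = {y + a * t |y a. y \<in> Fspan u \<and> a \<in> F}"
proof (intro equalityI subsetI)
  fix x assume "x \<in> Fspan (u @ [t])"
  then obtain c where c: "\<forall>i<Suc (length u). c i \<in> F"
    "x = lincomb {..<length u} u c + c (length u) * t"
    by (auto simp: Fspan_on_iff lincomb_snoc)
  moreover have "lincomb {..<length u} u c \<in> Fspan u"
    using c(1) by (intro lincomb_in_Fspan_on) auto
  ultimately show "x \<in> {y + a * t |y a. y \<in> Fspan u \<and> a \<in> F}"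
    by auto
next
  fix x assume "x \<in> {y + a * t |y a. y \<in> Fspan u \<and> a \<in> F}"
  then obtain c a where c: "\<forall>i<length u. c i \<in> F" "a \<in> F"
    "x = lincomb {..<length u} u c + a * t"
    by (auto simp: Fspan_on_iff)
  have "lincomb {..<length u} u (c(length u := a)) = lincomb {..<length u} u c"
    by (rule lincomb_cong) simp
  then have "x = lincomb {..<length (u @ [t])} (u @ [t]) (c(length u := a))"
    using c(3) by (simp add: lincomb_snoc)
  moreover have "lincomb {..<length (u @ [t])} (u @ [t]) (c(length u := a)) \<in> Fspan (u @ [t])"
    using c(1,2) by (intro lincomb_in_Fspan_on) (auto simp: less_Suc_eq)
  ultimately show "x \<in> Fspan (u @ [t])"
    by simp
qed

lemma rank_over_snoc: "rank_over F (u @ [t]) = rank_over F u + (if t \<in> Fspan u then 0 else 1)"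
proof (cases "t \<in> Fspan u")
  case True
  have "Fspan (u @ [t]) \<subseteq> Fspan u"
    using True set_subset_Fspan[of u] by (intro Fspan_subset_Fspan) auto
  moreover have "Fspan u \<subseteq> Fspan (u @ [t])"
    using set_subset_Fspan[of "u @ [t]"] by (intro Fspan_subset_Fspan) auto
  ultimately show ?thesis
    using True rank_over_eqI[of "u @ [t]" u] by simp
next
  case False
  have "inj_on (\<lambda>(y, a). y + a * t) (Fspan u \<times> F)"
  proof (rule inj_onI, clarify)
    fix y a y' a' assume y: "y \<in> Fspan u" "y' \<in> Fspan u" and a: "a \<in> F" "a' \<in> F"
      and eq: "y + a * t = y' + a' * t"
    have "a = a'"
    proof (rule ccontr)
      assume "a \<noteq> a'"
      then have "t = inverse (a - a') * (y' - y)"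
        using eq by (simp add: field_simps)
      moreover have "inverse (a - a') * (y' - y) \<in> Fspan u"
        using y a by (intro Fspan_on_smult Fspan_on_diff) auto
      ultimately show False
        using False by simp
    qed
    with eq show "y = y' \<and> a = a'"
      by simp
  qed
  moreover have "Fspan (u @ [t]) = (\<lambda>(y, a). y + a * t) ` (Fspan u \<times> F)"
    unfolding Fspan_snoc by auto
  ultimately have "card (Fspan (u @ [t])) = card (Fspan u) * q"
    by (simp add: card_image card_cartesian_product card_subfield)
  then have "q ^ rank_over F (u @ [t]) = q ^ Suc (rank_over F u)"
    using card_Fspan[of "u @ [t]"] card_Fspan[of u] by (simp add: mult.commute)
  then have "rank_over F (u @ [t]) = Suc (rank_over F u)"
    using q_gt_1 power_inject_exp by blast
  then show ?thesis
    using False by simp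
qed

lemma rank_over_snoc_full:
  assumes "rank_over F (u @ [t]) = Suc (length u)"
  shows "rank_over F u = length u" "t \<notin> Fspan u"
  using assms rank_over_snoc[of u t] rank_over_le_length[of u]
  by (auto split: if_splits)

lemma card_lincomb_fiber_le:
  assumes z: "z \<in> Fspan u" and z': "z' \<in> Fspan u"
  shows "card {c \<in> {..<length u} \<rightarrow>\<^sub>E F. lincomb {..<length u} u c = z} \<le>
    card {c \<in> {..<length u} \<rightarrow>\<^sub>E F. lincomb {..<length u} u c = z'}"
proof -
  let ?n = "length u" and ?C = "{..<length u} \<rightarrow>\<^sub>E F"
  let ?fiber = "\<lambda>z. {c \<in> ?C. lincomb {..<?n} u c = z}"
  obtain d where d: "\<forall>i\<in>{..<?n}. d i \<in> F" "z' - z = lincomb {..<?n} u d"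
    using Fspan_on_diff[OF z' z] by (rule Fspan_onE)
  let ?shift = "\<lambda>c. restrict (\<lambda>i. c i + d i) {..<?n}"
  have "inj_on ?shift ?C"
  proof (rule inj_onI)
    fix c c' assume c: "c \<in> ?C" "c' \<in> ?C" and eq: "?shift c = ?shift c'"
    have "c i = c' i" if "i < ?n" for i
      using fun_cong[OF eq, of i] that by simp
    with c show "c = c'"
      by (intro PiE_ext) auto
  qed
  moreover have "?shift ` ?fiber z \<subseteq> ?fiber z'"
  proof
    fix x assume "x \<in> ?shift ` ?fiber z"
    then obtain c where c: "c \<in> ?C" "lincomb {..<?n} u c = z" and x: "x = ?shift c"
      by blast
    have "x \<in> ?C"
      using c(1) d(1) x by (auto simp: PiE_iff)
    moreover have "lincomb {..<?n} u x = lincomb {..<?n} u c + lincomb {..<?n} u d"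
      unfolding x lincomb_add[symmetric] by (rule lincomb_cong) simp
    ultimately show "x \<in> ?fiber z'"
      using c(2) by (simp flip: d(2))
  qed
  ultimately show ?thesis
    by (intro card_inj_on_le) (auto simp: finite_PiE intro: inj_on_subset)
qed

lemma card_lincomb_fiber:
  assumes "z \<in> Fspan u"
  shows "card {c \<in> {..<length u} \<rightarrow>\<^sub>E F. lincomb {..<length u} u c = z} =
    q ^ (length u - rank_over F u)"
proof -
  let ?n = "length u" and ?C = "{..<length u} \<rightarrow>\<^sub>E F"
  let ?fiber = "\<lambda>z. {c \<in> ?C. lincomb {..<?n} u c = z}"
  have "q ^ ?n = card ?C"
    by (simp add: card_PiE card_subfield)
  also have "\<dots> = (\<Sum>z'\<in>Fspan u. card (?fiber z'))"
    using sum.group[of ?C "Fspan u" "lincomb {..<?n} u" "\<lambda>_. 1::nat"]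
    by (simp add: Fspan_on_def finite_PiE)
  also have "\<dots> = (\<Sum>z'\<in>Fspan u. card (?fiber z))"
    using assms card_lincomb_fiber_le by (intro sum.cong refl antisym) auto
  also have "\<dots> = q ^ rank_over F u * card (?fiber z)"
    by (simp add: card_Fspan)
  finally have "q ^ rank_over F u * q ^ (?n - rank_over F u) = q ^ rank_over F u * card (?fiber z)"
    using rank_over_le_length[of u] by (simp flip: power_add)
  then show ?thesis
    using q_gt_1 by simp
qed

lemma card_lincomb_fiber_if:
  "card {c \<in> {..<length u} \<rightarrow>\<^sub>E F. lincomb {..<length u} u c = z} =
    (if z \<in> Fspan u then q ^ (length u - rank_over F u) else 0)"
proof (cases "z \<in> Fspan u")
  case False
  then have "{c \<in> {..<length u} \<rightarrow>\<^sub>E F. lincomb {..<length u} u c = z} = {}"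
    by (auto simp: Fspan_on_def image_iff)
  then show ?thesis
    unfolding if_not_P[OF False] by (simp only: card.empty)
qed (simp add: card_lincomb_fiber)

lemma rank_over_permute_list:
  assumes "p permutes {..<length u}"
  shows "rank_over F (permute_list p u) = rank_over F u"
proof -
  have "Fspan (permute_list p u) = Fspan u"
    using assms set_subset_Fspan[of u] set_subset_Fspan[of "permute_list p u"]
    by (intro equalityI Fspan_subset_Fspan) simp_all
  then show ?thesis
    by (intro rank_over_eqI) simp
qed

lemma rank_over_scale:
  assumes "a \<noteq> 0"
  shows "rank_over F (map ((*) a) u) = rank_over F u"
proof -
  have "lincomb {..<length u} (map ((*) a) u) c = a * lincomb {..<length u} u c" for c
    by (simp add: lincomb_def sum_distrib_left mult_ac)
  then have "Fspan (map ((*) a) u) = (*) a ` Fspan u"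
    by (simp add: Fspan_on_def image_image)
  moreover have "inj_on ((*) a) (Fspan u)"
    using assms by (simp add: inj_on_def)
  ultimately show ?thesis
    by (intro rank_over_eqI) (simp add: card_image)
qed

lemma rank_over_plus_scaled_snoc:
  assumes "\<forall>i<length u. c i \<in> F"
  shows "rank_over F (plus_scaled u t c @ [t]) = rank_over F (u @ [t])"
proof -
  let ?u' = "plus_scaled u t c @ [t]"
  have t: "t \<in> Fspan (u @ [t])" "t \<in> Fspan ?u'"
    using set_subset_Fspan[of "u @ [t]"] set_subset_Fspan[of ?u'] by auto
  have "u ! i + t * c i \<in> Fspan (u @ [t])" if "i < length u" for i
    using set_subset_Fspan[of "u @ [t]"] that assms t
    by (intro Fspan_on_add Fspan_on_smult[of "c i" t, simplified mult.commute]) (auto simp: nth_append)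
  then have "Fspan ?u' \<subseteq> Fspan (u @ [t])"
    using t by (intro Fspan_subset_Fspan) (auto simp: in_set_conv_nth)
  moreover have "u ! i \<in> Fspan ?u'" if "i < length u" for i
  proof -
    have "u ! i + t * c i \<in> Fspan ?u'"
      using set_subset_Fspan[of ?u'] that by (force simp: in_set_conv_nth nth_append)
    then have "(u ! i + t * c i) - c i * t \<in> Fspan ?u'"
      using assms that t by (intro Fspan_on_diff Fspan_on_smult) auto
    then show ?thesis
      by (simp add: mult.commute)
  qed
  then have "Fspan (u @ [t]) \<subseteq> Fspan ?u'"
    using t by (intro Fspan_subset_Fspan) (auto simp: in_set_conv_nth)
  ultimately show ?thesis
    by (intro rank_over_eqI) (metis length_append_singleton length_plus_scaled subset_antisym)
qed

lemma rank_over_replicate_0: "rank_over F (replicate n 0) = 0"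
proof -
  have "Fspan (replicate n 0) \<subseteq> {0}"
    by (auto simp: Fspan_on_def lincomb_def)
  then have "Fspan (replicate n 0) = {0}"
    using Fspan_on_zero by blast
  then have "q ^ rank_over F (replicate n 0) = q ^ 0"
    using card_Fspan[of "replicate n 0"] by simp
  then show ?thesis
    using q_gt_1 power_inject_exp by blast
qed

end

section \<open>Counting vectors by rank and inner product\<close>

lemma finite_lists_length [simp]: "finite {u :: 'a::finite list. length u = n}"
  using finite_lists_length_eq[of "UNIV :: 'a set" n] by simp

lemma sum_card_filter_swap:
  assumes "finite A" "finite B"
  shows "(\<Sum>x\<in>A. card {y \<in> B. P x y}) = (\<Sum>y\<in>B. card {x \<in> A. P x y})"
proof -
  have "(SIGMA x:A. {y \<in> B. P x y}) = prod.swap ` (SIGMA y:B. {x \<in> A. P x y})"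
    by auto
  then have "card (SIGMA x:A. {y \<in> B. P x y}) = card (SIGMA y:B. {x \<in> A. P x y})"
    by (simp add: card_image)
  with assms show ?thesis
    by simp
qed

context finite_field_extension
begin

text \<open>These are N, T and D of the overview.\<close>

definition count_dot :: "'a list \<Rightarrow> nat \<Rightarrow> 'a \<Rightarrow> nat" where
  "count_dot v k a = card {u. length u = length v \<and> rank_over F u = k \<and> dot u v = a}"

definition count_rank :: "nat \<Rightarrow> nat \<Rightarrow> nat" where
  "count_rank n k = card {u :: 'a list. length u = n \<and> rank_over F u = k}"

definition orth_excess :: "'a list \<Rightarrow> nat \<Rightarrow> real" where
  "orth_excess v k = real (count_dot v k 0) - real (count_dot v k 1)"

lemma count_dot_scale:
  assumes "a \<noteq> 0"
  shows "count_dot v k a = count_dot v k 1"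
proof -
  have "bij_betw (map ((*) a)) {u. length u = length v \<and> rank_over F u = k \<and> dot u v = 1}
      {u. length u = length v \<and> rank_over F u = k \<and> dot u v = a}"
    by (rule bij_betw_byWitness[where f' = "map ((*) (inverse a))"])
      (use assms in \<open>auto simp: comp_def rank_over_scale dot_scale_left mult.assoc[symmetric]\<close>)
  then show ?thesis
    unfolding count_dot_def by (rule bij_betw_same_card[symmetric])
qed

lemma sum_count_dot: "(\<Sum>a\<in>UNIV. count_dot v k a) = count_rank (length v) k"
proof -
  let ?U = "{u :: 'a list. length u = length v \<and> rank_over F u = k}"
  have "(\<Sum>a\<in>UNIV. card {u \<in> ?U. dot u v = a}) = card ?U"
    using sum.group[of ?U UNIV "\<lambda>u. dot u v" "\<lambda>_. 1::nat"] by simp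
  then show ?thesis
    by (simp add: count_dot_def count_rank_def conj_assoc)
qed

lemma count_dot_0:
  "real q ^ m * real (count_dot v k 0) =
    real (count_rank (length v) k) + (real q ^ m - 1) * orth_excess v k"
proof -
  have "count_rank (length v) k = count_dot v k 0 + (\<Sum>a\<in>UNIV - {0}. count_dot v k a)"
    unfolding sum_count_dot[symmetric] by (rule sum.remove) simp_all
  also have "(\<Sum>a\<in>UNIV - {0}. count_dot v k a) = (\<Sum>a\<in>UNIV - {0::'a}. count_dot v k 1)"
    by (rule sum.cong) (auto intro!: count_dot_scale)
  also have "\<dots> = (q ^ m - 1) * count_dot v k 1"
    by (simp add: card_Diff_subset card_field)
  finally have "real (count_rank (length v) k) = real (count_dot v k 0) + (real q ^ m - 1) * real (count_dot v k 1)"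
    using q_gt_1 by (simp add: of_nat_diff)
  then show ?thesis
    by (simp add: orth_excess_def algebra_simps)
qed

lemma count_dot_permute_list:
  assumes "p permutes {..<length v}"
  shows "count_dot (permute_list p v) k a = count_dot v k a"
proof -
  have inv: "inv p permutes {..<length v}"
    using assms by (rule permutes_inv)
  have cancel: "permute_list p (permute_list (inv p) u) = u"
    "permute_list (inv p) (permute_list p u) = u" if "length u = length v" for u
    using that assms inv
    by (simp_all flip: permute_list_compose add: permutes_inv_o)
  have "bij_betw (permute_list p) {u. length u = length v \<and> rank_over F u = k \<and> dot u v = a}
      {u. length u = length v \<and> rank_over F u = k \<and> dot u (permute_list p v) = a}"
  proof (rule bij_betw_byWitness[where f' = "permute_list (inv p)"])
    show "permute_list p ` {u. length u = length v \<and> rank_over F u = k \<and> dot u v = a}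
      \<subseteq> {u. length u = length v \<and> rank_over F u = k \<and> dot u (permute_list p v) = a}"
      using assms by (auto simp: rank_over_permute_list dot_permute_list)
    show "permute_list (inv p) ` {u. length u = length v \<and> rank_over F u = k \<and> dot u (permute_list p v) = a}
      \<subseteq> {u. length u = length v \<and> rank_over F u = k \<and> dot u v = a}"
    proof
      fix x assume "x \<in> permute_list (inv p) ` {u. length u = length v \<and> rank_over F u = k \<and>
        dot u (permute_list p v) = a}"
      then obtain u where u: "length u = length v" "rank_over F u = k" "dot u (permute_list p v) = a"
        and x: "x = permute_list (inv p) u"
        by blast
      have "dot x v = dot x (permute_list (inv p) (permute_list p v))"
        using cancel(2)[of v] by simp
      also have "\<dots> = dot u (permute_list p v)"
        unfolding x using inv u(1) by (intro dot_permute_list) simp_all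
      finally show "x \<in> {u. length u = length v \<and> rank_over F u = k \<and> dot u v = a}"
        using u x inv by (simp add: rank_over_permute_list)
    qed
  qed (simp_all add: cancel)
  then show ?thesis
    unfolding count_dot_def length_permute_list by (rule bij_betw_same_card[symmetric])
qed

lemma orth_excess_permute_list:
  "p permutes {..<length v} \<Longrightarrow> orth_excess (permute_list p v) k = orth_excess v k"
  by (simp add: orth_excess_def count_dot_permute_list)

lemma count_dot_snoc:
  "count_dot (v @ [w]) k a =
    card {(u, t). length u = length v \<and> rank_over F (u @ [t]) = k \<and> dot u v + t * w = a}"
proof -
  let ?P = "{(u, t). length u = length v \<and> rank_over F (u @ [t]) = k \<and> dot u v + t * w = a}"
  have "{x. length x = length (v @ [w]) \<and> rank_over F x = k \<and> dot x (v @ [w]) = a} =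
      (\<lambda>(u, t). u @ [t]) ` ?P"
  proof (intro equalityI subsetI)
    fix x assume x: "x \<in> {x. length x = length (v @ [w]) \<and> rank_over F x = k \<and> dot x (v @ [w]) = a}"
    then obtain u t where "x = u @ [t]"
      by (cases x rule: rev_cases) auto
    with x show "x \<in> (\<lambda>(u, t). u @ [t]) ` ?P"
      by (force simp: dot_snoc)
  qed (auto simp: dot_snoc)
  moreover have "inj_on (\<lambda>(u, t). u @ [t]) ?P"
    by (auto simp: inj_on_def)
  ultimately show ?thesis
    by (simp add: count_dot_def card_image)
qed

lemma card_rank_over_snoc:
  "real (card {t. rank_over F (u @ [t]) = k}) =
     (if rank_over F u = k then real q ^ k else 0) +
     (if Suc (rank_over F u) = k then real q ^ m - real q ^ rank_over F u else 0)"
proof -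
  consider "rank_over F u = k" | "Suc (rank_over F u) = k"
    | "rank_over F u \<noteq> k" "Suc (rank_over F u) \<noteq> k"
    by blast
  then show ?thesis
  proof cases
    case 1
    then have "{t. rank_over F (u @ [t]) = k} = Fspan u"
      by (auto simp: rank_over_snoc)
    with 1 show ?thesis
      by (simp add: card_Fspan)
  next
    case 2
    then have "{t. rank_over F (u @ [t]) = k} = UNIV - Fspan u"
      by (auto simp: rank_over_snoc)
    moreover have "q ^ rank_over F u \<le> q ^ m"
      using card_mono[of UNIV "Fspan u"] by (simp add: card_field card_Fspan)
    ultimately show ?thesis
      using 2 by (simp add: card_Diff_subset card_field card_Fspan of_nat_diff)
  next
    case 3
    then have "{t. rank_over F (u @ [t]) = k} = {}"
      by (auto simp: rank_over_snoc)
    with 3 show ?thesis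
      by simp
  qed
qed

text \<open>Writing \<open>w\<close> as a combination \<open>c\<close> of the coordinates of \<open>v\<close>, the shear
  \<open>(u, t) \<mapsto> (u + t c, t)\<close> removes \<open>w\<close> from the equation \<open>u.v + t w = a\<close>
  without changing the rank of \<open>u @ [t]\<close>.\<close>

lemma count_dot_snoc_dependent:
  assumes "w \<in> Fspan v"
  shows "real (count_dot (v @ [w]) k a) = real q ^ k * real (count_dot v k a) +
    (if k = 0 then 0 else (real q ^ m - real q ^ (k - 1)) * real (count_dot v (k - 1) a))"
proof -
  obtain c where c: "\<forall>i\<in>{..<length v}. c i \<in> F" "w = lincomb {..<length v} v c"
    using assms by (rule Fspan_onE)
  let ?S = "{u. length u = length v \<and> dot u v = a}"
  have "bij_betw (\<lambda>(u, t). (plus_scaled u t c, t))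
      {(u, t). length u = length v \<and> rank_over F (u @ [t]) = k \<and> dot u v + t * w = a}
      (SIGMA u:?S. {t. rank_over F (u @ [t]) = k})"
    by (rule bij_betw_byWitness[where f' = "\<lambda>(u, t). (plus_scaled u t (\<lambda>i. - c i), t)"])
      (use c in \<open>auto simp: plus_scaled_cancel dot_plus_scaled_left rank_over_plus_scaled_snoc
        lincomb_uminus\<close>)
  then have "count_dot (v @ [w]) k a = card (SIGMA u:?S. {t. rank_over F (u @ [t]) = k})"
    unfolding count_dot_snoc by (rule bij_betw_same_card)
  then have "real (count_dot (v @ [w]) k a) =
      (\<Sum>u\<in>?S. (if rank_over F u = k then real q ^ k else 0) +
        (if Suc (rank_over F u) = k then real q ^ m - real q ^ rank_over F u else 0))"
    by (simp add: card_rank_over_snoc)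
  also have "\<dots> = real q ^ k * real (card {u \<in> ?S. rank_over F u = k}) +
      (if k = 0 then 0 else (real q ^ m - real q ^ (k - 1)) * real (card {u \<in> ?S. rank_over F u = k - 1}))"
  proof -
    have finite_S: "finite ?S"
      by simp
    have sum_if: "(\<Sum>u\<in>?S. if P u then x else 0) = x * real (card {u \<in> ?S. P u})" for P x
      using sum.inter_filter[OF finite_S, of "\<lambda>_. x" P] by (simp add: mult.commute)
    have "(\<Sum>u\<in>?S. if Suc (rank_over F u) = k then real q ^ m - real q ^ rank_over F u else 0) =
        (\<Sum>u\<in>?S. if k \<noteq> 0 \<and> rank_over F u = k - 1 then real q ^ m - real q ^ (k - 1) else 0)"
      by (rule sum.cong) auto
    then show ?thesis
      by (simp add: sum.distrib sum_if mult.commute)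
  qed
  finally show ?thesis
    by (simp add: count_dot_def conj_ac)
qed

lemma orth_excess_snoc_dependent:
  assumes "w \<in> Fspan v"
  shows "orth_excess (v @ [w]) k = real q ^ k * orth_excess v k +
    (if k = 0 then 0 else (real q ^ m - real q ^ (k - 1)) * orth_excess v (k - 1))"
  using count_dot_snoc_dependent[OF assms] by (simp add: orth_excess_def algebra_simps)

lemma count_dot_snoc_nonzero:
  assumes "w \<noteq> 0"
  shows "count_dot (v @ [w]) k a =
    card {u. length u = length v \<and> rank_over F (u @ [(a - dot u v) / w]) = k}"
proof -
  have "bij_betw (\<lambda>u. (u, (a - dot u v) / w))
      {u. length u = length v \<and> rank_over F (u @ [(a - dot u v) / w]) = k}
      {(u, t). length u = length v \<and> rank_over F (u @ [t]) = k \<and> dot u v + t * w = a}"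
    by (rule bij_betw_byWitness[where f' = fst]) (use assms in \<open>auto simp: field_simps\<close>)
  then show ?thesis
    unfolding count_dot_snoc by (rule bij_betw_same_card[symmetric])
qed

definition count_in_span :: "'a list \<Rightarrow> 'a \<Rightarrow> nat \<Rightarrow> 'a \<Rightarrow> nat" where
  "count_in_span v w j a =
    card {u. length u = length v \<and> rank_over F u = j \<and> (a - dot u v) / w \<in> Fspan u}"

lemma count_dot_snoc_nonzero_split:
  assumes "w \<noteq> 0"
  shows "real (count_dot (v @ [w]) k a) = real (count_in_span v w k a) +
    (if k = 0 then 0 else real (count_rank (length v) (k - 1)) - real (count_in_span v w (k - 1) a))"
proof -
  let ?t = "\<lambda>u. (a - dot u v) / w"
  let ?A = "\<lambda>j. {u. length u = length v \<and> rank_over F u = j \<and> ?t u \<in> Fspan u}"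
  let ?B = "{u. length u = length v \<and> Suc (rank_over F u) = k \<and> ?t u \<notin> Fspan u}"
  have "{u. length u = length v \<and> rank_over F (u @ [?t u]) = k} = ?A k \<union> ?B"
    by (auto simp: rank_over_snoc)
  then have "count_dot (v @ [w]) k a = count_in_span v w k a + card ?B"
    unfolding count_dot_snoc_nonzero[OF assms] count_in_span_def
    by (subst card_Un_disjoint[symmetric]) auto
  moreover have "real (card ?B) =
      (if k = 0 then 0 else real (count_rank (length v) (k - 1)) - real (count_in_span v w (k - 1) a))"
  proof (cases k)
    case (Suc j)
    let ?R = "{u. length u = length v \<and> rank_over F u = j}"
    have "?B = ?R - ?A j" "?A j \<subseteq> ?R"
      using Suc by auto
    moreover have "finite ?R"
      by simp
    ultimately have "real (card ?B) = real (card ?R) - real (card (?A j))"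
      by (simp add: card_Diff_subset card_mono finite_subset of_nat_diff)
    then show ?thesis
      using Suc by (simp add: count_rank_def count_in_span_def)
  qed simp
  ultimately show ?thesis
    by simp
qed

lemma card_shear_solutions:
  assumes "w \<noteq> 0" "length u = length v"
  shows "card {c \<in> {..<length v} \<rightarrow>\<^sub>E F. dot u (plus_scaled v w c) = a} =
    (if (a - dot u v) / w \<in> Fspan u then q ^ (length v - rank_over F u) else 0)"
proof -
  have "dot u (plus_scaled v w c) = a \<longleftrightarrow> lincomb {..<length u} u c = (a - dot u v) / w" for c
    using assms by (simp add: dot_plus_scaled_right field_simps)
  then have "{c \<in> {..<length v} \<rightarrow>\<^sub>E F. dot u (plus_scaled v w c) = a} =
      {c \<in> {..<length u} \<rightarrow>\<^sub>E F. lincomb {..<length u} u c = (a - dot u v) / w}"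
    using assms(2) by simp
  then show ?thesis
    using assms(2) card_lincomb_fiber_if[of u "(a - dot u v) / w"] by simp
qed

text \<open>Double counting of the pairs \<open>(u, c)\<close> with \<open>u.(v + w c) = a\<close>.\<close>

lemma count_in_span_average:
  assumes "w \<noteq> 0"
  shows "q ^ length v * count_in_span v w j a =
    q ^ j * (\<Sum>c\<in>{..<length v} \<rightarrow>\<^sub>E F. count_dot (plus_scaled v w c) j a)"
proof -
  let ?n = "length v" and ?C = "{..<length v} \<rightarrow>\<^sub>E F"
  let ?U = "{u :: 'a list. length u = ?n \<and> rank_over F u = j}"
  let ?in_span = "\<lambda>u. (a - dot u v) / w \<in> Fspan u"
  have "q ^ j * (\<Sum>c\<in>?C. count_dot (plus_scaled v w c) j a) =
      q ^ j * (\<Sum>c\<in>?C. card {u \<in> ?U. dot u (plus_scaled v w c) = a})"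
    by (simp add: count_dot_def conj_ac)
  also have "\<dots> = q ^ j * (\<Sum>u\<in>?U. card {c \<in> ?C. dot u (plus_scaled v w c) = a})"
    by (subst sum_card_filter_swap) (simp_all add: finite_PiE)
  also have "\<dots> = (\<Sum>u\<in>?U. if ?in_span u then q ^ ?n else 0)"
    unfolding sum_distrib_left
  proof (rule sum.cong)
    fix u assume u: "u \<in> ?U"
    then have "j \<le> ?n"
      using rank_over_le_length[of u] by simp
    with u show "q ^ j * card {c \<in> ?C. dot u (plus_scaled v w c) = a} = (if ?in_span u then q ^ ?n else 0)"
      by (simp add: card_shear_solutions[OF assms] flip: power_add)
  qed simp
  also have "\<dots> = q ^ ?n * card {u \<in> ?U. ?in_span u}"
    using sum.inter_filter[of ?U "\<lambda>_. q ^ ?n" ?in_span] by (simp add: mult.commute)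
  also have "{u \<in> ?U. ?in_span u} =
      {u. length u = length v \<and> rank_over F u = j \<and> (a - dot u v) / w \<in> Fspan u}"
    by blast
  finally show ?thesis
    by (simp only: count_in_span_def)
qed

lemma orth_excess_snoc_independent:
  assumes full: "rank_over F (v @ [w]) = Suc (length v)"
    and shear_invariant: "\<And>c j. c \<in> {..<length v} \<rightarrow>\<^sub>E F \<Longrightarrow>
      orth_excess (plus_scaled v w c) j = orth_excess v j"
  shows "orth_excess (v @ [w]) k = real q ^ k * orth_excess v k -
    (if k = 0 then 0 else real q ^ (k - 1) * orth_excess v (k - 1))"
proof -
  let ?C = "{..<length v} \<rightarrow>\<^sub>E F"
  have "w \<noteq> 0"
    using rank_over_snoc_full(2)[OF full] Fspan_on_zero by auto
  have in_span_excess: "real (count_in_span v w j 0) - real (count_in_span v w j 1) =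
      real q ^ j * orth_excess v j" for j
  proof -
    have "real q ^ length v * (real (count_in_span v w j 0) - real (count_in_span v w j 1)) =
        real q ^ j * (\<Sum>c\<in>?C. orth_excess (plus_scaled v w c) j)"
      using arg_cong[OF count_in_span_average[OF \<open>w \<noteq> 0\<close>, of v j 0], of real]
        arg_cong[OF count_in_span_average[OF \<open>w \<noteq> 0\<close>, of v j 1], of real]
      by (simp add: orth_excess_def sum_subtractf algebra_simps)
    also have "\<dots> = real q ^ length v * (real q ^ j * orth_excess v j)"
      by (simp add: shear_invariant card_PiE card_subfield)
    finally show ?thesis
      using q_gt_1 by simp
  qed
  have "orth_excess (v @ [w]) k =
      (real (count_in_span v w k 0) - real (count_in_span v w k 1)) -
      (if k = 0 then 0 else real (count_in_span v w (k - 1) 0) - real (count_in_span v w (k - 1) 1))"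
    using count_dot_snoc_nonzero_split[OF \<open>w \<noteq> 0\<close>, of v k 0]
      count_dot_snoc_nonzero_split[OF \<open>w \<noteq> 0\<close>, of v k 1]
    by (simp add: orth_excess_def)
  then show ?thesis
    by (simp only: in_span_excess)
qed

lemma rank_over_plus_scaled_full:
  assumes "rank_over F (v @ [w]) = Suc (length v)" "c \<in> {..<length v} \<rightarrow>\<^sub>E F"
  shows "rank_over F (plus_scaled v w c) = length v"
proof -
  have "rank_over F (plus_scaled v w c @ [w]) = Suc (length (plus_scaled v w c))"
    using assms by (simp add: rank_over_plus_scaled_snoc PiE_iff)
  then show ?thesis
    by (simp add: rank_over_snoc_full(1))
qed

lemma permute_dependent_last:
  assumes "rank_over F v < length v"
  obtains p v' w where "p permutes {..<length v}" "permute_list p v = v' @ [w]" "w \<in> Fspan v'"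
proof -
  obtain j where j: "j < length v" "v ! j \<in> Fspan_on ({..<length v} - {j}) v"
    using assms by (rule dependent_coordinate)
  obtain n where n: "length v = Suc n"
    using j(1) by (cases "length v") auto
  define p where "p = Transposition.transpose j n"
  have p: "p permutes {..<length v}"
    unfolding p_def using j(1) n by (intro permutes_swap_id) auto
  let ?v' = "take n (permute_list p v)"
  have "permute_list p v ! n = v ! j"
    using n p by (simp add: permute_list_nth p_def)
  then have split: "permute_list p v = ?v' @ [v ! j]"
    using take_Suc_conv_app_nth[of n "permute_list p v"] n by simp
  have "v ! i \<in> Fspan ?v'" if "i \<in> {..<length v} - {j}" for i
  proof -
    have "p i < n"
      using that n j(1) by (auto simp: p_def transpose_def)
    moreover have "v ! i = permute_list p v ! p i"
      using permute_list_nth[OF p, of "p i"] permutes_in_image[OF p, of i] that by (simp add: p_def)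
    ultimately have "v ! i \<in> set ?v'"
      using n by (auto simp: in_set_conv_nth)
    then show ?thesis
      using set_subset_Fspan by blast
  qed
  then have "v ! j \<in> Fspan ?v'"
    using j(2) Fspan_on_subset by blast
  with p split show ?thesis
    by (rule that)
qed

lemma orth_excess_Nil: "orth_excess [] k = (if k = 0 then 1 else 0)"
proof -
  have "rank_over F [] = 0"
    using rank_over_le_length[of "[]"] by simp
  then have "{u. length u = length [] \<and> rank_over F u = k \<and> dot u [] = a} =
      (if k = 0 \<and> a = 0 then {[]} else {})" for a :: 'a
    by (auto simp: dot_def)
  then show ?thesis
    by (simp add: orth_excess_def count_dot_def)
qed

lemma orth_excess_full_rank_step:
  assumes excess_full: "\<And>u j. length u = n \<Longrightarrow> rank_over F u = n \<Longrightarrow>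
      orth_excess u j = hcoeff (qpow q poly_B n) j (int m)"
    and "length v = Suc n" "rank_over F v = Suc n"
  shows "orth_excess v k = hcoeff (qpow q poly_B (Suc n)) k (int m)"
proof -
  obtain v' w where v: "v = v' @ [w]"
    using assms(2) by (cases v rule: rev_cases) auto
  have length_v': "length v' = n"
    using assms(2) v by simp
  have full: "rank_over F (v' @ [w]) = Suc (length v')"
    using assms(3) v length_v' by simp
  have rank_v': "rank_over F v' = n"
    using rank_over_snoc_full(1)[OF full] length_v' by simp
  have "orth_excess v k = real q ^ k * orth_excess v' k -
      (if k = 0 then 0 else real q ^ (k - 1) * orth_excess v' (k - 1))"
    unfolding v
  proof (rule orth_excess_snoc_independent[OF full])
    fix c j assume "c \<in> {..<length v'} \<rightarrow>\<^sub>E F"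
    then have "rank_over F (plus_scaled v' w c) = n"
      using rank_over_plus_scaled_full[OF full] length_v' by simp
    then show "orth_excess (plus_scaled v' w c) j = orth_excess v' j"
      using excess_full[of "plus_scaled v' w c" j] excess_full[of v' j] rank_v' length_v' by simp
  qed
  also have "\<dots> = hcoeff (qprod q (qpow q poly_B n) poly_B) k (int m)"
    using rank_v' length_v' by (simp add: hcoeff_qprod_poly_B excess_full)
  finally show ?thesis
    by simp
qed

lemma orth_excess_deficient_rank_step:
  assumes IH: "\<And>u j. length u = n \<Longrightarrow> orth_excess u j =
      hcoeff (qprod q (qpow q poly_B (rank_over F u)) (qpow q (poly_A q) (n - rank_over F u))) j (int m)"
    and "length v = Suc n" "rank_over F v < Suc n"
  shows "orth_excess v k =
    hcoeff (qprod q (qpow q poly_B (rank_over F v)) (qpow q (poly_A q) (Suc n - rank_over F v))) k (int m)"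
proof -
  have "rank_over F v < length v"
    using assms(2,3) by simp
  then obtain p v' w where p: "p permutes {..<length v}"
    and split: "permute_list p v = v' @ [w]" and w: "w \<in> Fspan v'"
    by (rule permute_dependent_last)
  have length_v': "length v' = n"
    using arg_cong[OF split, of length] assms(2) by simp
  define r where "r = rank_over F v"
  have rank_v': "rank_over F v' = r"
    using rank_over_permute_list[OF p] rank_over_snoc[of v' w] w split by (simp add: r_def)
  have "r \<le> n"
    using rank_over_le_length[of v'] rank_v' length_v' by simp
  have "orth_excess v k = orth_excess (v' @ [w]) k"
    using orth_excess_permute_list[OF p] split by metis
  also have "\<dots> = real q ^ k * orth_excess v' k +
      (if k = 0 then 0 else (real q ^ m - real q ^ (k - 1)) * orth_excess v' (k - 1))"
    by (rule orth_excess_snoc_dependent[OF w])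
  also have "\<dots> = hcoeff (qprod q (qprod q (qpow q poly_B r) (qpow q (poly_A q) (n - r))) (poly_A q)) k (int m)"
    using IH[of v'] length_v' rank_v' q_gt_1
    by (simp add: hcoeff_qprod_poly_A power_int_of_nat del: qpow.simps)
  also have "\<dots> = hcoeff (qprod q (qpow q poly_B r) (qpow q (poly_A q) (Suc n - r))) k (int m)"
    using \<open>r \<le> n\<close> by (simp only: hcoeff_qprod_assoc Suc_diff_le qpow.simps(2))
  finally show ?thesis
    by (simp add: r_def)
qed

theorem orth_excess_eq_hcoeff:
  "orth_excess v k = hcoeff (qprod q (qpow q poly_B (rank_over F v))
     (qpow q (poly_A q) (length v - rank_over F v))) k (int m)"
proof (induction "length v" arbitrary: v k)
  case 0
  then have "v = []"
    by simp
  moreover have "rank_over F [] = 0"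
    using rank_over_le_length[of "[]"] by simp
  ultimately show ?case
    by (simp only: orth_excess_Nil list.size diff_zero hcoeff_qprod_qpow_0_left hcoeff_qpow_0)
next
  case (Suc n)
  consider (full) "rank_over F v = Suc n" | (deficient) "rank_over F v < Suc n"
    using rank_over_le_length[of v] Suc.hyps(2) by linarith
  then show ?case
  proof cases
    case full
    have "orth_excess v k = hcoeff (qpow q poly_B (Suc n)) k (int m)"
      using Suc.hyps full
      by (intro orth_excess_full_rank_step) (simp_all add: hcoeff_qprod_qpow_0_right del: qpow.simps)
    with full Suc.hyps(2) show ?thesis
      by (simp add: hcoeff_qprod_qpow_0_right del: qpow.simps)
  next
    case deficient
    with Suc.hyps show ?thesis
      using orth_excess_deficient_rank_step[of n v k] by simp
  qed
qed

lemma count_rank_eq_hcoeff: "real (count_rank n k) = hcoeff (qpow q (poly_A q) n) k (int m)"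
proof -
  have "orth_excess (replicate n 0) k = real (count_rank n k)"
    by (simp add: orth_excess_def count_dot_def count_rank_def)
  then show ?thesis
    using orth_excess_eq_hcoeff[of "replicate n 0" k]
    by (simp only: rank_over_replicate_0 length_replicate diff_zero hcoeff_qprod_qpow_0_left)
qed

lemma rank_weight_enum_dual_span:
  "rank_weight_enum F (length v) (dual_span v) x y =
    (\<Sum>k=0..length v. real (count_dot v k 0) * (y ^ k * x ^ (length v - k)))"
proof -
  let ?n = "length v"
  have dual: "dual_span v = {u. length u = ?n \<and> dot u v = 0}"
    by (simp add: dual_span_def dot_def)
  have "rank_weight_enum F ?n (dual_span v) x y =
      (\<Sum>k=0..?n. \<Sum>u\<in>{u \<in> dual_span v. rank_over F u = k}. y ^ rank_over F u * x ^ (?n - rank_over F u))"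
    unfolding rank_weight_enum_def dual
    by (intro sum.group[symmetric]) (auto simp: image_subset_iff, metis rank_over_le_length)
  also have "\<dots> = (\<Sum>k=0..?n. real (count_dot v k 0) * (y ^ k * x ^ (?n - k)))"
  proof (rule sum.cong[OF refl])
    fix k
    have "{u \<in> dual_span v. rank_over F u = k} = {u. length u = ?n \<and> rank_over F u = k \<and> dot u v = 0}"
      by (auto simp: dual)
    then show "(\<Sum>u\<in>{u \<in> dual_span v. rank_over F u = k}. y ^ rank_over F u * x ^ (?n - rank_over F u)) =
        real (count_dot v k 0) * (y ^ k * x ^ (?n - k))"
      by (simp add: count_dot_def)
  qed
  finally show ?thesis .
qed

theorem rank_weight_enum_dual_span_eq:
  "rank_weight_enum F (length v) (dual_span v) x y =
    (1 / real q ^ m) *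
      (heval (qpow q (poly_A q) (length v)) (int m) x y
       + (real q ^ m - 1) * heval (qprod q (qpow q poly_B (rank_over F v))
           (qpow q (poly_A q) (length v - rank_over F v))) (int m) x y)"
proof -
  let ?n = "length v" and ?r = "rank_over F v" and ?Q = "real q ^ m"
  let ?f = "\<lambda>k. y ^ k * x ^ (length v - k)"
  have "?r \<le> ?n"
    by (rule rank_over_le_length)
  have heval_A: "heval (qpow q (poly_A q) ?n) (int m) x y = (\<Sum>k=0..?n. real (count_rank ?n k) * ?f k)"
    by (simp add: heval_def count_rank_eq_hcoeff mult.assoc)
  have heval_excess: "heval (qprod q (qpow q poly_B ?r) (qpow q (poly_A q) (?n - ?r))) (int m) x y =
      (\<Sum>k=0..?n. orth_excess v k * ?f k)"
    using \<open>?r \<le> ?n\<close> by (simp add: heval_def orth_excess_eq_hcoeff mult.assoc)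
  have "rank_weight_enum F ?n (dual_span v) x y =
      (1 / ?Q) * (\<Sum>k=0..?n. (real (count_rank ?n k) + (?Q - 1) * orth_excess v k) * ?f k)"
    unfolding rank_weight_enum_dual_span count_dot_0[symmetric] sum_distrib_left
    using q_gt_1 by (intro sum.cong) simp_all
  also have "\<dots> = (1 / ?Q) * (heval (qpow q (poly_A q) ?n) (int m) x y +
      (?Q - 1) * heval (qprod q (qpow q poly_B ?r) (qpow q (poly_A q) (?n - ?r))) (int m) x y)"
    unfolding heval_A heval_excess by (simp only: sum.distrib sum_distrib_left distrib_right mult.assoc)
  finally show ?thesis .
qed

end

theorem proposition16:
  fixes F :: "'a::{finite,field} set" and q m n r :: nat and v :: "'a list"
  assumes "is_subfield F" and "card F = q" and "card (UNIV :: 'a set) = q ^ m"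
    and "length v = n" and "rank_over F v = r"
  shows "\<forall>x y. rank_weight_enum F n (dual_span v) x y =
    (1 / real q ^ m) *
      (heval (qpow q (poly_A q) n) (int m) x y
       + (real q ^ m - 1) * heval (qprod q (qpow q poly_B r) (qpow q (poly_A q) (n - r))) (int m) x y)"
proof -
  interpret finite_field_extension F q m
    using assms(1-3) by unfold_locales
  show ?thesis
    using rank_weight_enum_dual_span_eq[of v] assms(4,5) by simp
qed

end
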